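(* Let $R$ be a principal ideal domain. For any two strata $S,T$ of $\mathfrak{A}_2$ and every $q>0$, $\operatorname{Ext}^q_{\operatorname{Rep}(Q_{\mathfrak{A}_2},\rho_{\mathfrak{A}_2})}(I_S,I_T)=0$.
   Context: $\mathfrak{A}_2$ is the stratification of $S^2$ into two points $P_1,P_2$ on a great circle, the two open arcs $E_1,E_2$ between them, and the two open hemispheres $H_1,H_2$. Its quiver $(Q_{\mathfrak{A}_2},\rho_{\mathfrak{A}_2})$ has one vertex per stratum, an arrow $S\to T$ whenever $S\subsetneq\overline{T}$ (namely $P_i\to E_j$, $E_j\to H_k$, $P_i\to H_k$), and relations identifying all paths with the same endpoints; $\operatorname{Rep}$ denotes the category of representations by $R$-modules satisfying the relations. For a stratum $S$, $I_S$ is the representation with $R$ at $S$ and at every vertex $T$ with $T\subset\overline{S}$ (i.e. having a path to $S$), $0$ at all other vertices, identity maps on arrows between vertices carrying $R$ and zero maps otherwise; it corresponds to the sheaf $i_!R_{\overline S}$, $i:\overline S\hookrightarrow S^2$. *)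

theory Defs
  imports "HOL-Algebra.Algebra"
begin

datatype stratum = P1 | P2 | E1 | E2 | H1 | H2

text \<open>Arrows S -> T whenever S is properly contained in the closure of T.\<close>
definition arrow :: "stratum \<Rightarrow> stratum \<Rightarrow> bool" where
  "arrow S T \<longleftrightarrow> (S \<in> {P1, P2} \<and> T \<in> {E1, E2, H1, H2}) \<or> (S \<in> {E1, E2} \<and> T \<in> {H1, H2})"

text \<open>S is contained in the closure of T (there is a path, possibly trivial, from S to T).\<close>
definition sleq :: "stratum \<Rightarrow> stratum \<Rightarrow> bool" where
  "sleq S T \<longleftrightarrow> S = T \<or> arrow S T"

text \<open>A representation: a module at each vertex and a map for each arrow
  (the value of the map component at non-arrows is irrelevant).\<close>
type_synonym ('r, 'a) qrep = "(stratum \<Rightarrow> ('r, 'a) module) \<times> (stratum \<Rightarrow> stratum \<Rightarrow> 'a \<Rightarrow> 'a)"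

definition is_hom :: "'r ring \<Rightarrow> ('r, 'a) module \<Rightarrow> ('r, 'b) module \<Rightarrow> ('a \<Rightarrow> 'b) \<Rightarrow> bool" where
  "is_hom R M N h \<longleftrightarrow> h \<in> carrier M \<rightarrow> carrier N
     \<and> (\<forall>x \<in> carrier M. \<forall>y \<in> carrier M. h (x \<oplus>\<^bsub>M\<^esub> y) = h x \<oplus>\<^bsub>N\<^esub> h y)
     \<and> (\<forall>a \<in> carrier R. \<forall>x \<in> carrier M. h (a \<odot>\<^bsub>M\<^esub> x) = a \<odot>\<^bsub>N\<^esub> h x)"

text \<open>Representations satisfying the relations (all paths with the same endpoints agree).
  The only paths of length >= 2 are P -> E -> H, which must agree with the arrow P -> H.\<close>
definition is_rep :: "'r ring \<Rightarrow> ('r, 'a) qrep \<Rightarrow> bool" where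
  "is_rep R F \<longleftrightarrow> (\<forall>S. module R (fst F S))
     \<and> (\<forall>S T. arrow S T \<longrightarrow> is_hom R (fst F S) (fst F T) (snd F S T))
     \<and> (\<forall>S T U. arrow S T \<and> arrow T U \<longrightarrow>
          (\<forall>x \<in> carrier (fst F S). snd F T U (snd F S T x) = snd F S U x))"

definition is_morph :: "'r ring \<Rightarrow> ('r, 'a) qrep \<Rightarrow> ('r, 'b) qrep \<Rightarrow> (stratum \<Rightarrow> 'a \<Rightarrow> 'b) \<Rightarrow> bool" where
  "is_morph R F G \<phi> \<longleftrightarrow> (\<forall>S. is_hom R (fst F S) (fst G S) (\<phi> S))
     \<and> (\<forall>S T. arrow S T \<longrightarrow>
          (\<forall>x \<in> carrier (fst F S). \<phi> T (snd F S T x) = snd G S T (\<phi> S x)))"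

definition Rmod :: "'r ring \<Rightarrow> ('r, 'r) module" where
  "Rmod R = ring.extend R (module.fields (\<lambda>a x. a \<otimes>\<^bsub>R\<^esub> x))"

definition Zmod :: "'r ring \<Rightarrow> ('r, 'r) module" where
  "Zmod R = (Rmod R)\<lparr>carrier := {\<zero>\<^bsub>R\<^esub>}\<rparr>"

definition I_rep :: "'r ring \<Rightarrow> stratum \<Rightarrow> ('r, 'r) qrep" where
  "I_rep R S = ((\<lambda>T. if sleq T S then Rmod R else Zmod R),
                (\<lambda>T U. if sleq T S \<and> sleq U S then (\<lambda>x. x) else (\<lambda>x. \<zero>\<^bsub>R\<^esub>)))"

text \<open>Transport along the (unique) path from S to T; identity if S = T.\<close>
definition path_map :: "('r, 'a) qrep \<Rightarrow> stratum \<Rightarrow> stratum \<Rightarrow> 'a \<Rightarrow> 'a" where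
  "path_map F S T x = (if S = T then x else snd F S T x)"

text \<open>Equivalently F is a direct sum of representable
  (projective) representations P_S.\<close>
definition is_free_on :: "'r ring \<Rightarrow> ('r, 'a) qrep \<Rightarrow> (stratum \<times> 'a) set \<Rightarrow> bool" where
  "is_free_on R F B \<longleftrightarrow> (\<forall>p \<in> B. snd p \<in> carrier (fst F (fst p)))
     \<and> (\<forall>T. \<forall>x \<in> carrier (fst F T). \<exists>!c.
          (\<forall>p. p \<notin> {p \<in> B. sleq (fst p) T} \<longrightarrow> c p = \<zero>\<^bsub>R\<^esub>)
        \<and> (\<forall>p \<in> {p \<in> B. sleq (fst p) T}. c p \<in> carrier R)
        \<and> finite {p \<in> B. sleq (fst p) T \<and> c p \<noteq> \<zero>\<^bsub>R\<^esub>}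
        \<and> x = finsum (fst F T) (\<lambda>p. c p \<odot>\<^bsub>fst F T\<^esub> path_map F (fst p) T (snd p))
                 {p \<in> B. sleq (fst p) T \<and> c p \<noteq> \<zero>\<^bsub>R\<^esub>})"

text \<open>A free resolution  ... -> F 2 --d 1--> F 1 --d 0--> F 0 --eps--> A -> 0
  (exactness in Rep is vertexwise).\<close>
definition free_resolution :: "'r ring \<Rightarrow> ('r, 'x) qrep \<Rightarrow> (nat \<Rightarrow> ('r, 'a) qrep)
     \<Rightarrow> (nat \<Rightarrow> stratum \<Rightarrow> 'a \<Rightarrow> 'a) \<Rightarrow> (stratum \<Rightarrow> 'a \<Rightarrow> 'x) \<Rightarrow> bool" where
  "free_resolution R A F d eps \<longleftrightarrow>
     (\<forall>n. is_rep R (F n) \<and> (\<exists>B. is_free_on R (F n) B))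
   \<and> (\<forall>n. is_morph R (F (Suc n)) (F n) (d n))
   \<and> is_morph R (F 0) A eps
   \<and> (\<forall>S. eps S ` carrier (fst (F 0) S) = carrier (fst A S))
   \<and> (\<forall>S. {x \<in> carrier (fst (F 0) S). eps S x = \<zero>\<^bsub>fst A S\<^esub>}
           = d 0 S ` carrier (fst (F 1) S))
   \<and> (\<forall>n S. {x \<in> carrier (fst (F (Suc n)) S). d n S x = \<zero>\<^bsub>fst (F n) S\<^esub>}
           = d (Suc n) S ` carrier (fst (F (Suc (Suc n))) S))"

text \<open>Ext^q(A,Y) = H^q(Hom(F_*, Y)) for a (free, hence projective) resolution F of A.
  Vanishing for q > 0: every q-cocycle is a coboundary.\<close>
definition Ext_vanishes :: "'r ring \<Rightarrow> (nat \<Rightarrow> ('r, 'a) qrep) \<Rightarrow> (nat \<Rightarrow> stratum \<Rightarrow> 'a \<Rightarrow> 'a)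
     \<Rightarrow> ('r, 'y) qrep \<Rightarrow> nat \<Rightarrow> bool" where
  "Ext_vanishes R F d Y q \<longleftrightarrow>
     (\<forall>g. is_morph R (F q) Y g
        \<and> (\<forall>S. \<forall>x \<in> carrier (fst (F (Suc q)) S). g S (d q S x) = \<zero>\<^bsub>fst Y S\<^esub>)
      \<longrightarrow> (\<exists>h. is_morph R (F (q - 1)) Y h
             \<and> (\<forall>S. \<forall>x \<in> carrier (fst (F q) S). g S x = h S (d (q - 1) S x))))"

end

theory Submission
  imports Defs
begin

(* Ext is computed from a free resolution F of I_S: a q-cocycle is a morphism
   g : F(q) -> I_T killing the image of d(q), and we must write g = h o d(q-1).
   Two observations make this work.
   (1) Evaluated at the vertex T, the resolution is an exact complex of free R-modules
       over I_S(T), which is R or 0, hence free.  Such a complex splits: free modules are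
       projective, so by induction every module of boundaries is a retract of F_n(T).
       Consequently the T-component of a cocycle factors through d(q-1) at T.
   (2) A morphism into I_T is the same as an R-linear functional on the T-component,
       transported along the paths V -> T; so the factorisation at T extends to all of I_T. *)

section \<open>Homomorphisms of modules\<close>

lemma hom_closed: "is_hom R M N h \<Longrightarrow> x \<in> carrier M \<Longrightarrow> h x \<in> carrier N"
  unfolding is_hom_def by auto

lemma hom_add:
  "is_hom R M N h \<Longrightarrow> x \<in> carrier M \<Longrightarrow> y \<in> carrier M \<Longrightarrow> h (x \<oplus>\<^bsub>M\<^esub> y) = h x \<oplus>\<^bsub>N\<^esub> h y"
  unfolding is_hom_def by auto

lemma hom_smult:
  "is_hom R M N h \<Longrightarrow> a \<in> carrier R \<Longrightarrow> x \<in> carrier M \<Longrightarrow> h (a \<odot>\<^bsub>M\<^esub> x) = a \<odot>\<^bsub>N\<^esub> h x"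
  unfolding is_hom_def by auto

lemma hom_zero:
  assumes "module R M" "module R N" "is_hom R M N h"
  shows "h \<zero>\<^bsub>M\<^esub> = \<zero>\<^bsub>N\<^esub>"
proof -
  interpret M: module R M by fact
  interpret N: module R N by fact
  have c: "h \<zero>\<^bsub>M\<^esub> \<in> carrier N" using hom_closed[OF assms(3)] by simp
  have "h \<zero>\<^bsub>M\<^esub> \<oplus>\<^bsub>N\<^esub> h \<zero>\<^bsub>M\<^esub> = h \<zero>\<^bsub>M\<^esub> \<oplus>\<^bsub>N\<^esub> \<zero>\<^bsub>N\<^esub>"
    using hom_add[OF assms(3), of "\<zero>\<^bsub>M\<^esub>" "\<zero>\<^bsub>M\<^esub>"] c by simp
  then show ?thesis using c by (simp add: N.add.l_cancel)
qed

lemma hom_minus: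
  assumes "module R M" "module R N" "is_hom R M N h" "x \<in> carrier M" "y \<in> carrier M"
  shows "h (x \<ominus>\<^bsub>M\<^esub> y) = h x \<ominus>\<^bsub>N\<^esub> h y"
proof -
  interpret M: module R M by fact
  interpret N: module R N by fact
  have "h (x \<ominus>\<^bsub>M\<^esub> y) \<oplus>\<^bsub>N\<^esub> h y = h x"
    using hom_add[OF assms(3), of "x \<ominus>\<^bsub>M\<^esub> y" y] assms(4,5)
    by (simp add: M.minus_eq M.add.m_assoc M.l_neg)
  moreover have "h (x \<ominus>\<^bsub>M\<^esub> y) \<in> carrier N" "h y \<in> carrier N" "h x \<in> carrier N"
    using hom_closed[OF assms(3)] assms(4,5) by auto
  ultimately show ?thesis
    by (metis N.add.inv_solve_right N.minus_eq)
qed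

lemma hom_eq_if_minus_zero:
  assumes "module R M" "module R N" "is_hom R M N h" "x \<in> carrier M" "y \<in> carrier M"
    and "h (x \<ominus>\<^bsub>M\<^esub> y) = \<zero>\<^bsub>N\<^esub>"
  shows "h x = h y"
proof -
  interpret N: module R N by fact
  have "h x \<ominus>\<^bsub>N\<^esub> h y = \<zero>\<^bsub>N\<^esub>" using hom_minus[OF assms(1-5)] assms(6) by simp
  moreover have "h x \<in> carrier N" "h y \<in> carrier N" using hom_closed[OF assms(3)] assms(4,5) by auto
  ultimately show ?thesis by (metis N.add.inv_solve_right N.l_zero N.minus_eq N.zero_closed)
qed

lemma hom_id: "module R M \<Longrightarrow> is_hom R M M (\<lambda>x. x)"
  unfolding is_hom_def by auto

lemma hom_comp: "is_hom R M N f \<Longrightarrow> is_hom R N P g \<Longrightarrow> is_hom R M P (\<lambda>x. g (f x))"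
  unfolding is_hom_def by (auto simp: Pi_def)

text \<open>The pointwise difference of homomorphisms is a homomorphism; retractions are built as
  \<open>id - (section \<circ> projection)\<close>.\<close>
lemma hom_diff:
  assumes "module R M" "module R N" "is_hom R M N f" "is_hom R M N g"
  shows "is_hom R M N (\<lambda>x. f x \<ominus>\<^bsub>N\<^esub> g x)"
  unfolding is_hom_def
proof (intro conjI ballI)
  interpret N: module R N by fact
  show "(\<lambda>x. f x \<ominus>\<^bsub>N\<^esub> g x) \<in> carrier M \<rightarrow> carrier N"
    using hom_closed[OF assms(3)] hom_closed[OF assms(4)] by auto
  fix x y assume xy: "x \<in> carrier M" "y \<in> carrier M"
  have "f x \<in> carrier N" "f y \<in> carrier N" "g x \<in> carrier N" "g y \<in> carrier N"
    using hom_closed[OF assms(3)] hom_closed[OF assms(4)] xy by auto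
  then show "f (x \<oplus>\<^bsub>M\<^esub> y) \<ominus>\<^bsub>N\<^esub> g (x \<oplus>\<^bsub>M\<^esub> y) = f x \<ominus>\<^bsub>N\<^esub> g x \<oplus>\<^bsub>N\<^esub> (f y \<ominus>\<^bsub>N\<^esub> g y)"
    using hom_add[OF assms(3) xy] hom_add[OF assms(4) xy]
    by (simp add: N.minus_eq N.minus_add N.a_ac)
next
  interpret N: module R N by fact
  fix a x assume ax: "a \<in> carrier R" "x \<in> carrier M"
  have "f x \<in> carrier N" "g x \<in> carrier N"
    using hom_closed[OF assms(3)] hom_closed[OF assms(4)] ax by auto
  then show "f (a \<odot>\<^bsub>M\<^esub> x) \<ominus>\<^bsub>N\<^esub> g (a \<odot>\<^bsub>M\<^esub> x) = a \<odot>\<^bsub>N\<^esub> (f x \<ominus>\<^bsub>N\<^esub> g x)"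
    using hom_smult[OF assms(3) ax] hom_smult[OF assms(4) ax] ax
    by (simp add: N.minus_eq N.smult_r_distr N.smult_r_minus)
qed

lemma hom_finsum:
  assumes "module R M" "module R N" "is_hom R M N h" "finite A" "f \<in> A \<rightarrow> carrier M"
  shows "h (finsum M f A) = finsum N (\<lambda>i. h (f i)) A"
  using assms(4,5)
proof (induction A rule: finite_induct)
  case empty
  interpret M: module R M by fact
  interpret N: module R N by fact
  show ?case using hom_zero[OF assms(1-3)] by simp
next
  case (insert x A)
  interpret M: module R M by fact
  interpret N: module R N by fact
  have "f \<in> A \<rightarrow> carrier M" "f x \<in> carrier M" using insert by auto
  moreover have "(\<lambda>i. h (f i)) \<in> A \<rightarrow> carrier N" "h (f x) \<in> carrier N"
    using calculation hom_closed[OF assms(3)] by auto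
  ultimately show ?case
    using insert M.finsum_insert N.finsum_insert hom_add[OF assms(3)] M.finsum_closed by simp
qed

section \<open>Free modules are projective\<close>

text \<open>This is the
  vertexwise shape of the freeness condition \<open>is_free_on\<close>.\<close>
definition is_coordinates ::
    "'r ring \<Rightarrow> ('r, 'a) module \<Rightarrow> 'q set \<Rightarrow> ('q \<Rightarrow> 'a) \<Rightarrow> 'a \<Rightarrow> ('q \<Rightarrow> 'r) \<Rightarrow> bool" where
  "is_coordinates R M Xs b x c \<longleftrightarrow> (\<forall>p. p \<notin> Xs \<longrightarrow> c p = \<zero>\<^bsub>R\<^esub>) \<and> (\<forall>p\<in>Xs. c p \<in> carrier R)
     \<and> finite {p\<in>Xs. c p \<noteq> \<zero>\<^bsub>R\<^esub>} \<and> x = finsum M (\<lambda>p. c p \<odot>\<^bsub>M\<^esub> b p) {p\<in>Xs. c p \<noteq> \<zero>\<^bsub>R\<^esub>}"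

definition basis :: "'r ring \<Rightarrow> ('r, 'a) module \<Rightarrow> 'q set \<Rightarrow> ('q \<Rightarrow> 'a) \<Rightarrow> bool" where
  "basis R M Xs b \<longleftrightarrow> (\<forall>p\<in>Xs. b p \<in> carrier M) \<and> (\<forall>x\<in>carrier M. \<exists>!c. is_coordinates R M Xs b x c)"

definition coord :: "'r ring \<Rightarrow> ('r, 'a) module \<Rightarrow> 'q set \<Rightarrow> ('q \<Rightarrow> 'a) \<Rightarrow> 'a \<Rightarrow> 'q \<Rightarrow> 'r" where
  "coord R M Xs b x = (THE c. is_coordinates R M Xs b x c)"

lemma coord_spec:
  assumes "basis R M Xs b" "x \<in> carrier M"
  shows "is_coordinates R M Xs b x (coord R M Xs b x)"
proof -
  have "\<exists>!c. is_coordinates R M Xs b x c" using assms unfolding basis_def by blast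
  then show ?thesis unfolding coord_def by (rule theI')
qed

lemma coord_unique:
  assumes "basis R M Xs b" "x \<in> carrier M" "is_coordinates R M Xs b x c"
  shows "coord R M Xs b x = c"
  unfolding coord_def by (rule the1_equality) (use assms in \<open>auto simp: basis_def\<close>)

lemma finsum_over_support:
  assumes "module R M" "finite U" "{p\<in>Xs. c p \<noteq> \<zero>\<^bsub>R\<^esub>} \<subseteq> U" "U \<subseteq> Xs"
    "\<And>p. p \<in> U \<Longrightarrow> c p \<in> carrier R" "\<And>p. p \<in> U \<Longrightarrow> b p \<in> carrier M"
  shows "finsum M (\<lambda>p. c p \<odot>\<^bsub>M\<^esub> b p) {p\<in>Xs. c p \<noteq> \<zero>\<^bsub>R\<^esub>} = finsum M (\<lambda>p. c p \<odot>\<^bsub>M\<^esub> b p) U"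
proof -
  interpret M: module R M by fact
  show ?thesis
    by (rule M.add.finprod_mono_neutral_cong_left) (use assms in auto)
qed

lemma basis_closed: "basis R M Xs b \<Longrightarrow> p \<in> Xs \<Longrightarrow> b p \<in> carrier M"
  unfolding basis_def by blast

lemma coord_closed:
  assumes "basis R M Xs b" "x \<in> carrier M"
  shows "p \<in> Xs \<Longrightarrow> coord R M Xs b x p \<in> carrier R"
    and "p \<notin> Xs \<Longrightarrow> coord R M Xs b x p = \<zero>\<^bsub>R\<^esub>"
    and "finite {p\<in>Xs. coord R M Xs b x p \<noteq> \<zero>\<^bsub>R\<^esub>}"
  using coord_spec[OF assms] unfolding is_coordinates_def by blast+

lemma coord_expansion:
  assumes "basis R M Xs b" "module R M" "x \<in> carrier M" "finite U" "U \<subseteq> Xs"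
    "{p\<in>Xs. coord R M Xs b x p \<noteq> \<zero>\<^bsub>R\<^esub>} \<subseteq> U"
  shows "x = finsum M (\<lambda>p. coord R M Xs b x p \<odot>\<^bsub>M\<^esub> b p) U"
proof -
  have "x = finsum M (\<lambda>p. coord R M Xs b x p \<odot>\<^bsub>M\<^esub> b p) {p\<in>Xs. coord R M Xs b x p \<noteq> \<zero>\<^bsub>R\<^esub>}"
    using coord_spec[OF assms(1,3)] unfolding is_coordinates_def by blast
  also have "\<dots> = finsum M (\<lambda>p. coord R M Xs b x p \<odot>\<^bsub>M\<^esub> b p) U"
    using finsum_over_support[OF assms(2,4,6,5)] coord_closed(1)[OF assms(1,3)]
      basis_closed[OF assms(1)] assms(5) by blast
  finally show ?thesis .
qed

lemma is_coordinatesI: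
  assumes "module R M" "finite U" "U \<subseteq> Xs"
    and "\<And>p. p \<notin> U \<Longrightarrow> c p = \<zero>\<^bsub>R\<^esub>" "\<And>p. p \<in> U \<Longrightarrow> c p \<in> carrier R"
    and "\<And>p. p \<in> U \<Longrightarrow> b p \<in> carrier M"
    and "x = finsum M (\<lambda>p. c p \<odot>\<^bsub>M\<^esub> b p) U"
  shows "is_coordinates R M Xs b x c"
proof -
  interpret M: module R M by fact
  have supp: "{p\<in>Xs. c p \<noteq> \<zero>\<^bsub>R\<^esub>} \<subseteq> U" using assms(4) by blast
  have "x = finsum M (\<lambda>p. c p \<odot>\<^bsub>M\<^esub> b p) {p\<in>Xs. c p \<noteq> \<zero>\<^bsub>R\<^esub>}"
    using finsum_over_support[OF assms(1,2) supp assms(3,5,6)] assms(7) by simp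
  then show ?thesis
    unfolding is_coordinates_def using assms(2-5) supp finite_subset by fastforce
qed

text \<open>By uniqueness, coordinates depend linearly on the element.\<close>
lemma coord_add:
  assumes B: "basis R M Xs b" and M: "module R M" and xy: "x \<in> carrier M" "y \<in> carrier M"
  shows "coord R M Xs b (x \<oplus>\<^bsub>M\<^esub> y) = (\<lambda>p. coord R M Xs b x p \<oplus>\<^bsub>R\<^esub> coord R M Xs b y p)"
proof -
  interpret M: module R M by fact
  let ?c = "coord R M Xs b"
  define U where "U = {p\<in>Xs. ?c x p \<noteq> \<zero>\<^bsub>R\<^esub>} \<union> {p\<in>Xs. ?c y p \<noteq> \<zero>\<^bsub>R\<^esub>}"
  have U: "finite U" "U \<subseteq> Xs" using coord_closed(3)[OF B] xy unfolding U_def by auto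
  have cl: "\<And>z p. z \<in> carrier M \<Longrightarrow> p \<in> U \<Longrightarrow> ?c z p \<in> carrier R" "\<And>p. p \<in> U \<Longrightarrow> b p \<in> carrier M"
    using coord_closed(1)[OF B] basis_closed[OF B] U(2) by blast+
  have "x = finsum M (\<lambda>p. ?c x p \<odot>\<^bsub>M\<^esub> b p) U" "y = finsum M (\<lambda>p. ?c y p \<odot>\<^bsub>M\<^esub> b p) U"
    by (rule coord_expansion[OF B M _ U]; use xy in \<open>force simp: U_def\<close>)+
  then have "x \<oplus>\<^bsub>M\<^esub> y = finsum M (\<lambda>p. ?c x p \<odot>\<^bsub>M\<^esub> b p) U \<oplus>\<^bsub>M\<^esub> finsum M (\<lambda>p. ?c y p \<odot>\<^bsub>M\<^esub> b p) U"
    by (rule arg_cong2)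
  also have "\<dots> = finsum M (\<lambda>p. ?c x p \<odot>\<^bsub>M\<^esub> b p \<oplus>\<^bsub>M\<^esub> ?c y p \<odot>\<^bsub>M\<^esub> b p) U"
    by (rule M.finsum_addf[symmetric]) (use cl xy in auto)
  also have "\<dots> = finsum M (\<lambda>p. (?c x p \<oplus>\<^bsub>R\<^esub> ?c y p) \<odot>\<^bsub>M\<^esub> b p) U"
    by (rule M.finsum_cong') (use cl xy in \<open>auto simp: M.smult_l_distr\<close>)
  finally have sum: "x \<oplus>\<^bsub>M\<^esub> y = finsum M (\<lambda>p. (?c x p \<oplus>\<^bsub>R\<^esub> ?c y p) \<odot>\<^bsub>M\<^esub> b p) U" .
  have "is_coordinates R M Xs b (x \<oplus>\<^bsub>M\<^esub> y) (\<lambda>p. ?c x p \<oplus>\<^bsub>R\<^esub> ?c y p)"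
    by (rule is_coordinatesI[OF M U _ _ _ sum])
      (use cl xy coord_closed(2)[OF B] in \<open>auto simp: U_def\<close>)
  moreover have "x \<oplus>\<^bsub>M\<^esub> y \<in> carrier M" using xy by simp
  ultimately show ?thesis by (rule coord_unique[OF B, rotated])
qed

lemma coord_smult:
  assumes B: "basis R M Xs b" and M: "module R M" and a: "a \<in> carrier R" and x: "x \<in> carrier M"
  shows "coord R M Xs b (a \<odot>\<^bsub>M\<^esub> x) = (\<lambda>p. a \<otimes>\<^bsub>R\<^esub> coord R M Xs b x p)"
proof -
  interpret M: module R M by fact
  let ?c = "coord R M Xs b"
  define U where "U = {p\<in>Xs. ?c x p \<noteq> \<zero>\<^bsub>R\<^esub>}"
  have U: "finite U" "U \<subseteq> Xs" using coord_closed(3)[OF B x] unfolding U_def by auto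
  have cl: "\<And>p. p \<in> U \<Longrightarrow> ?c x p \<in> carrier R" "\<And>p. p \<in> U \<Longrightarrow> b p \<in> carrier M"
    using coord_closed(1)[OF B x] basis_closed[OF B] U(2) by blast+
  have "x = finsum M (\<lambda>p. ?c x p \<odot>\<^bsub>M\<^esub> b p) U"
    by (rule coord_expansion[OF B M x U]) (simp add: U_def)
  then have "a \<odot>\<^bsub>M\<^esub> x = a \<odot>\<^bsub>M\<^esub> finsum M (\<lambda>p. ?c x p \<odot>\<^bsub>M\<^esub> b p) U"
    by (rule arg_cong)
  also have "\<dots> = finsum M (\<lambda>p. (a \<otimes>\<^bsub>R\<^esub> ?c x p) \<odot>\<^bsub>M\<^esub> b p) U"
    by (subst M.finsum_smult_ldistr) (use U cl a in \<open>auto intro!: M.finsum_cong' simp: M.smult_assoc1\<close>)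
  finally have sum: "a \<odot>\<^bsub>M\<^esub> x = finsum M (\<lambda>p. (a \<otimes>\<^bsub>R\<^esub> ?c x p) \<odot>\<^bsub>M\<^esub> b p) U" .
  have "is_coordinates R M Xs b (a \<odot>\<^bsub>M\<^esub> x) (\<lambda>p. a \<otimes>\<^bsub>R\<^esub> ?c x p)"
    by (rule is_coordinatesI[OF M U _ _ _ sum])
      (use cl a coord_closed(2)[OF B x] in \<open>auto simp: U_def\<close>)
  moreover have "a \<odot>\<^bsub>M\<^esub> x \<in> carrier M" using a x by simp
  ultimately show ?thesis by (rule coord_unique[OF B, rotated])
qed

definition lin_ext ::
    "'r ring \<Rightarrow> ('r, 'a) module \<Rightarrow> ('r, 'b) module \<Rightarrow> 'q set \<Rightarrow> ('q \<Rightarrow> 'a) \<Rightarrow> ('q \<Rightarrow> 'b) \<Rightarrow> 'a \<Rightarrow> 'b" where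
  "lin_ext R M N Xs b y x =
     finsum N (\<lambda>p. coord R M Xs b x p \<odot>\<^bsub>N\<^esub> y p) {p\<in>Xs. coord R M Xs b x p \<noteq> \<zero>\<^bsub>R\<^esub>}"

lemma lin_ext_eq:
  assumes B: "basis R M Xs b" and N: "module R N" and x: "x \<in> carrier M"
    and y: "\<And>p. p \<in> Xs \<Longrightarrow> y p \<in> carrier N"
    and U: "finite U" "U \<subseteq> Xs" "{p\<in>Xs. coord R M Xs b x p \<noteq> \<zero>\<^bsub>R\<^esub>} \<subseteq> U"
  shows "lin_ext R M N Xs b y x = finsum N (\<lambda>p. coord R M Xs b x p \<odot>\<^bsub>N\<^esub> y p) U"
  unfolding lin_ext_def
  using finsum_over_support[OF N U(1,3,2)] coord_closed(1)[OF B x] y U(2) by blast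

lemma lin_ext_add:
  assumes B: "basis R M Xs b" and M: "module R M" and N: "module R N"
    and y: "\<And>p. p \<in> Xs \<Longrightarrow> y p \<in> carrier N" and x: "x1 \<in> carrier M" "x2 \<in> carrier M"
  shows "lin_ext R M N Xs b y (x1 \<oplus>\<^bsub>M\<^esub> x2) = lin_ext R M N Xs b y x1 \<oplus>\<^bsub>N\<^esub> lin_ext R M N Xs b y x2"
proof -
  interpret M: module R M by fact
  interpret N: module R N by fact
  let ?c = "coord R M Xs b" and ?t = "lin_ext R M N Xs b y"
  have cl: "\<And>x p. x \<in> carrier M \<Longrightarrow> p \<in> Xs \<Longrightarrow> ?c x p \<in> carrier R"
    using coord_closed(1)[OF B] by blast
  define U where "U = {p\<in>Xs. ?c x1 p \<noteq> \<zero>\<^bsub>R\<^esub>} \<union> {p\<in>Xs. ?c x2 p \<noteq> \<zero>\<^bsub>R\<^esub>}"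
  have U: "finite U" "U \<subseteq> Xs" using coord_closed(3)[OF B] x unfolding U_def by auto
  have supp: "{p\<in>Xs. ?c (x1 \<oplus>\<^bsub>M\<^esub> x2) p \<noteq> \<zero>\<^bsub>R\<^esub>} \<subseteq> U"
    using coord_add[OF B M x] by (auto simp: U_def)
  have "?t (x1 \<oplus>\<^bsub>M\<^esub> x2) = finsum N (\<lambda>p. ?c (x1 \<oplus>\<^bsub>M\<^esub> x2) p \<odot>\<^bsub>N\<^esub> y p) U"
    by (rule lin_ext_eq[OF B N _ y U supp]) (use x in simp)
  also have "\<dots> = finsum N (\<lambda>p. (?c x1 p \<oplus>\<^bsub>R\<^esub> ?c x2 p) \<odot>\<^bsub>N\<^esub> y p) U"
    by (simp add: coord_add[OF B M x])
  also have "\<dots> = finsum N (\<lambda>p. ?c x1 p \<odot>\<^bsub>N\<^esub> y p \<oplus>\<^bsub>N\<^esub> ?c x2 p \<odot>\<^bsub>N\<^esub> y p) U"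
    by (rule N.finsum_cong') (use U cl x y in \<open>auto simp: N.smult_l_distr\<close>)
  also have "\<dots> = finsum N (\<lambda>p. ?c x1 p \<odot>\<^bsub>N\<^esub> y p) U \<oplus>\<^bsub>N\<^esub> finsum N (\<lambda>p. ?c x2 p \<odot>\<^bsub>N\<^esub> y p) U"
    by (rule N.finsum_addf) (use U cl x y in auto)
  also have "\<dots> = ?t x1 \<oplus>\<^bsub>N\<^esub> ?t x2"
    using lin_ext_eq[OF B N x(1) y U] lin_ext_eq[OF B N x(2) y U] by (auto simp: U_def)
  finally show ?thesis .
qed

lemma lin_ext_smult:
  assumes B: "basis R M Xs b" and M: "module R M" and N: "module R N"
    and y: "\<And>p. p \<in> Xs \<Longrightarrow> y p \<in> carrier N" and a: "a \<in> carrier R" and x: "x \<in> carrier M"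
  shows "lin_ext R M N Xs b y (a \<odot>\<^bsub>M\<^esub> x) = a \<odot>\<^bsub>N\<^esub> lin_ext R M N Xs b y x"
proof -
  interpret M: module R M by fact
  interpret N: module R N by fact
  let ?c = "coord R M Xs b" and ?t = "lin_ext R M N Xs b y"
  have cl: "\<And>p. p \<in> Xs \<Longrightarrow> ?c x p \<in> carrier R"
    using coord_closed(1)[OF B x] by blast
  define U where "U = {p\<in>Xs. ?c x p \<noteq> \<zero>\<^bsub>R\<^esub>}"
  have U: "finite U" "U \<subseteq> Xs" using coord_closed(3)[OF B x] unfolding U_def by auto
  have supp: "{p\<in>Xs. ?c (a \<odot>\<^bsub>M\<^esub> x) p \<noteq> \<zero>\<^bsub>R\<^esub>} \<subseteq> U"
    using coord_smult[OF B M a x] a by (auto simp: U_def)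
  have "?t (a \<odot>\<^bsub>M\<^esub> x) = finsum N (\<lambda>p. ?c (a \<odot>\<^bsub>M\<^esub> x) p \<odot>\<^bsub>N\<^esub> y p) U"
    by (rule lin_ext_eq[OF B N _ y U supp]) (use a x in simp)
  also have "\<dots> = finsum N (\<lambda>p. (a \<otimes>\<^bsub>R\<^esub> ?c x p) \<odot>\<^bsub>N\<^esub> y p) U"
    by (simp add: coord_smult[OF B M a x])
  also have "\<dots> = finsum N (\<lambda>p. a \<odot>\<^bsub>N\<^esub> (?c x p \<odot>\<^bsub>N\<^esub> y p)) U"
    by (rule N.finsum_cong') (use U cl a y in \<open>auto simp: N.smult_assoc1\<close>)
  also have "\<dots> = a \<odot>\<^bsub>N\<^esub> finsum N (\<lambda>p. ?c x p \<odot>\<^bsub>N\<^esub> y p) U"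
    by (rule N.finsum_smult_ldistr[symmetric]) (use U cl a y in auto)
  also have "\<dots> = a \<odot>\<^bsub>N\<^esub> ?t x"
    using lin_ext_eq[OF B N x y U] by (simp add: U_def)
  finally show ?thesis .
qed

lemma lin_ext_hom:
  assumes B: "basis R M Xs b" and M: "module R M" and N: "module R N"
    and y: "\<And>p. p \<in> Xs \<Longrightarrow> y p \<in> carrier N"
  shows "is_hom R M N (lin_ext R M N Xs b y)"
proof -
  interpret N: module R N by fact
  have "lin_ext R M N Xs b y x \<in> carrier N" if "x \<in> carrier M" for x
    unfolding lin_ext_def using coord_closed(1)[OF B that] y by (auto intro!: N.finsum_closed)
  then show ?thesis
    unfolding is_hom_def
    using lin_ext_add[where y = y, OF B M N y] lin_ext_smult[where y = y, OF B M N y] by blast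
qed

text \<open>Projectivity of free modules: a homomorphism \<open>\<phi>\<close> out of a free module whose image lies
  in the image of \<open>f\<close> lifts through \<open>f\<close>: lift the basis vectors and extend linearly.\<close>
lemma free_module_lift:
  assumes B: "basis R M Xs b" and M: "module R M" and N: "module R N" and P: "module R P"
    and f: "is_hom R N P f" and \<phi>: "is_hom R M P \<phi>"
    and img: "\<And>x. x \<in> carrier M \<Longrightarrow> \<phi> x \<in> f ` carrier N"
  shows "\<exists>t. is_hom R M N t \<and> (\<forall>x\<in>carrier M. f (t x) = \<phi> x)"
proof -
  interpret M: module R M by fact
  interpret N: module R N by fact
  interpret P: module R P by fact
  have "\<forall>p\<in>Xs. \<exists>z. z \<in> carrier N \<and> f z = \<phi> (b p)"
    using img basis_closed[OF B] by (metis imageE)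
  then obtain y where y: "\<And>p. p \<in> Xs \<Longrightarrow> y p \<in> carrier N" "\<And>p. p \<in> Xs \<Longrightarrow> f (y p) = \<phi> (b p)"
    by metis
  let ?c = "coord R M Xs b" and ?t = "lin_ext R M N Xs b y"
  have "f (?t x) = \<phi> x" if x: "x \<in> carrier M" for x
  proof -
    define U where "U = {p\<in>Xs. ?c x p \<noteq> \<zero>\<^bsub>R\<^esub>}"
    have U: "finite U" "U \<subseteq> Xs" using coord_closed(3)[OF B x] unfolding U_def by auto
    have cl: "\<And>p. p \<in> U \<Longrightarrow> ?c x p \<in> carrier R" "\<And>p. p \<in> U \<Longrightarrow> b p \<in> carrier M"
      using coord_closed(1)[OF B x] basis_closed[OF B] U(2) by blast+
    have "?t x = finsum N (\<lambda>p. ?c x p \<odot>\<^bsub>N\<^esub> y p) U"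
      by (rule lin_ext_eq[OF B N x _ U]) (auto simp: U_def y(1))
    then have "f (?t x) = f (finsum N (\<lambda>p. ?c x p \<odot>\<^bsub>N\<^esub> y p) U)"
      by (rule arg_cong)
    also have "\<dots> = finsum P (\<lambda>p. f (?c x p \<odot>\<^bsub>N\<^esub> y p)) U"
      by (rule hom_finsum[OF N P f U(1)]) (use cl y U(2) in auto)
    also have "\<dots> = finsum P (\<lambda>p. \<phi> (?c x p \<odot>\<^bsub>M\<^esub> b p)) U"
      by (rule P.finsum_cong')
        (use cl y U(2) hom_smult[OF f] hom_smult[OF \<phi>] hom_closed[OF \<phi>] in auto)
    also have "\<dots> = \<phi> (finsum M (\<lambda>p. ?c x p \<odot>\<^bsub>M\<^esub> b p) U)"
      by (rule hom_finsum[OF M P \<phi> U(1), symmetric]) (use cl in auto)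
    also have "finsum M (\<lambda>p. ?c x p \<odot>\<^bsub>M\<^esub> b p) U = x"
      by (rule coord_expansion[OF B M x U, symmetric]) (simp add: U_def)
    finally show ?thesis .
  qed
  moreover have "is_hom R M N ?t" by (rule lin_ext_hom[OF B M N]) (rule y(1))
  ultimately show ?thesis by blast
qed

section \<open>Exact complexes of free modules split\<close>

text \<open>\<open>r\<close> is an idempotent endomorphism of \<open>M\<close> with image \<open>K\<close>, i.e. \<open>K\<close> is a direct summand.\<close>
definition is_retraction :: "'r ring \<Rightarrow> ('r, 'a) module \<Rightarrow> 'a set \<Rightarrow> ('a \<Rightarrow> 'a) \<Rightarrow> bool" where
  "is_retraction R M K r \<longleftrightarrow> is_hom R M M r \<and> (\<forall>x\<in>carrier M. r x \<in> K) \<and> (\<forall>x\<in>K. r x = x)"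

text \<open>If the image of \<open>\<delta> : N \<rightarrow> M\<close>, with \<open>M\<close> free, is a retract of \<open>M\<close>, then the kernel of
  \<open>\<delta>\<close> is a retract of \<open>N\<close>: with a lift \<open>t\<close> of the retraction, \<open>x \<mapsto> x - t (\<delta> x)\<close> works.\<close>
lemma kernel_retraction:
  assumes N: "module R N" and M: "module R M" and B: "basis R M Xs b"
    and \<delta>: "is_hom R N M \<delta>" and r: "is_retraction R M (\<delta> ` carrier N) r"
  shows "\<exists>r'. is_retraction R N {x\<in>carrier N. \<delta> x = \<zero>\<^bsub>M\<^esub>} r'"
proof -
  interpret N: module R N by fact
  interpret M: module R M by fact
  have r_hom: "is_hom R M M r" and r_in: "\<And>y. y \<in> carrier M \<Longrightarrow> r y \<in> \<delta> ` carrier N"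
    and r_id: "\<And>x. x \<in> carrier N \<Longrightarrow> r (\<delta> x) = \<delta> x"
    using r unfolding is_retraction_def by auto
  obtain t where t: "is_hom R M N t" "\<And>y. y \<in> carrier M \<Longrightarrow> \<delta> (t y) = r y"
    using free_module_lift[OF B M N M \<delta> r_hom r_in] by blast
  define r' where "r' x = x \<ominus>\<^bsub>N\<^esub> t (\<delta> x)" for x
  have "is_hom R N N r'"
    unfolding r'_def by (rule hom_diff[OF N N hom_id[OF N] hom_comp[OF \<delta> t(1)]])
  moreover have "\<delta> (r' x) = \<zero>\<^bsub>M\<^esub>" if x: "x \<in> carrier N" for x
  proof -
    have \<delta>x: "\<delta> x \<in> carrier M" using hom_closed[OF \<delta> x] .
    have "\<delta> (r' x) = \<delta> x \<ominus>\<^bsub>M\<^esub> \<delta> (t (\<delta> x))"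
      unfolding r'_def by (rule hom_minus[OF N M \<delta> x hom_closed[OF t(1) \<delta>x]])
    also have "\<dots> = \<delta> x \<ominus>\<^bsub>M\<^esub> \<delta> x" using t(2)[OF \<delta>x] r_id[OF x] by simp
    also have "\<dots> = \<zero>\<^bsub>M\<^esub>" using \<delta>x by (simp add: M.r_neg M.minus_eq)
    finally show ?thesis .
  qed
  moreover have "r' x = x" if "x \<in> carrier N" "\<delta> x = \<zero>\<^bsub>M\<^esub>" for x
    using that hom_zero[OF M N t(1)] unfolding r'_def by (simp add: N.minus_eq)
  ultimately have "is_retraction R N {x\<in>carrier N. \<delta> x = \<zero>\<^bsub>M\<^esub>} r'"
    unfolding is_retraction_def by (auto intro: hom_closed)
  then show ?thesis by blast
qed

lemma boundary_retractions:
  fixes M :: "nat \<Rightarrow> ('r, 'a) module" and \<delta> :: "nat \<Rightarrow> 'a \<Rightarrow> 'a"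
  assumes mods: "\<And>n. module R (M n)"
    and homs: "\<And>n. is_hom R (M (Suc n)) (M n) (\<delta> n)"
    and free: "\<And>n. \<exists>(Xs::'q set) b. basis R (M n) Xs b"
    and exact: "\<And>n. {x\<in>carrier (M (Suc n)). \<delta> n x = \<zero>\<^bsub>M n\<^esub>} = \<delta> (Suc n) ` carrier (M (Suc (Suc n)))"
    and base: "is_retraction R (M 0) (\<delta> 0 ` carrier (M 1)) r\<^sub>0"
  shows "\<exists>r. is_retraction R (M n) (\<delta> n ` carrier (M (Suc n))) r"
proof (induction n)
  case 0
  show ?case using base by auto
next
  case (Suc n)
  then obtain r where "is_retraction R (M n) (\<delta> n ` carrier (M (Suc n))) r" ..
  moreover obtain Xs :: "'q set" and b where "basis R (M n) Xs b" using free by blast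
  ultimately show ?case
    using kernel_retraction[OF mods mods _ homs] exact by metis
qed

text \<open>If the image of \<open>\<delta>\<close> is a retract, every homomorphism vanishing on the kernel of \<open>\<delta>\<close>
  factors through \<open>\<delta>\<close>: send \<open>y\<close> to \<open>g\<close> of any preimage of \<open>r y\<close>.\<close>
lemma factor_through_retracted_image:
  assumes MQ: "module R MQ" and MM: "module R MM" and Y: "module R Y"
    and \<delta>: "is_hom R MQ MM \<delta>" and r: "is_retraction R MM (\<delta> ` carrier MQ) r"
    and g: "is_hom R MQ Y g"
    and g_cocycle: "\<And>x. x \<in> carrier MQ \<Longrightarrow> \<delta> x = \<zero>\<^bsub>MM\<^esub> \<Longrightarrow> g x = \<zero>\<^bsub>Y\<^esub>"
  shows "\<exists>h. is_hom R MM Y h \<and> (\<forall>x\<in>carrier MQ. g x = h (\<delta> x))"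
proof -
  interpret MQ: module R MQ by fact
  interpret MM: module R MM by fact
  have r_hom: "is_hom R MM MM r" and r_in: "\<And>y. y \<in> carrier MM \<Longrightarrow> r y \<in> \<delta> ` carrier MQ"
    and r_id: "\<And>x. x \<in> carrier MQ \<Longrightarrow> r (\<delta> x) = \<delta> x"
    using r unfolding is_retraction_def by auto
  have g_welldef: "g x1 = g x2" if x: "x1 \<in> carrier MQ" "x2 \<in> carrier MQ" "\<delta> x1 = \<delta> x2" for x1 x2
  proof (rule hom_eq_if_minus_zero[OF MQ Y g x(1,2)])
    have "\<delta> (x1 \<ominus>\<^bsub>MQ\<^esub> x2) = \<zero>\<^bsub>MM\<^esub>"
      using hom_minus[OF MQ MM \<delta> x(1,2)] x hom_closed[OF \<delta>] by (simp add: MM.r_neg MM.minus_eq)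
    then show "g (x1 \<ominus>\<^bsub>MQ\<^esub> x2) = \<zero>\<^bsub>Y\<^esub>" using g_cocycle x by simp
  qed
  define pre where "pre y = (SOME x. x \<in> carrier MQ \<and> \<delta> x = r y)" for y
  have pre: "pre y \<in> carrier MQ \<and> \<delta> (pre y) = r y" if "y \<in> carrier MM" for y
  proof -
    from r_in[OF that] obtain x where "x \<in> carrier MQ" "\<delta> x = r y" by auto
    then show ?thesis unfolding pre_def by (rule someI[where x = x, OF conjI])
  qed
  define h where "h y = g (pre y)" for y
  have "is_hom R MM Y h"
    unfolding is_hom_def
  proof (intro conjI ballI)
    show "h \<in> carrier MM \<rightarrow> carrier Y" using pre hom_closed[OF g] unfolding h_def by auto
  next
    fix y1 y2 assume y: "y1 \<in> carrier MM" "y2 \<in> carrier MM"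
    have "\<delta> (pre (y1 \<oplus>\<^bsub>MM\<^esub> y2)) = \<delta> (pre y1 \<oplus>\<^bsub>MQ\<^esub> pre y2)"
      using pre y hom_add[OF \<delta>] hom_add[OF r_hom y] by simp
    then have "g (pre (y1 \<oplus>\<^bsub>MM\<^esub> y2)) = g (pre y1 \<oplus>\<^bsub>MQ\<^esub> pre y2)"
      by (intro g_welldef) (use pre y in auto)
    then show "h (y1 \<oplus>\<^bsub>MM\<^esub> y2) = h y1 \<oplus>\<^bsub>Y\<^esub> h y2"
      unfolding h_def using hom_add[OF g] pre y by simp
  next
    fix a y assume ay: "a \<in> carrier R" "y \<in> carrier MM"
    have "\<delta> (pre (a \<odot>\<^bsub>MM\<^esub> y)) = \<delta> (a \<odot>\<^bsub>MQ\<^esub> pre y)"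
      using pre ay hom_smult[OF \<delta>] hom_smult[OF r_hom ay] by simp
    then have "g (pre (a \<odot>\<^bsub>MM\<^esub> y)) = g (a \<odot>\<^bsub>MQ\<^esub> pre y)"
      by (intro g_welldef) (use pre ay in auto)
    then show "h (a \<odot>\<^bsub>MM\<^esub> y) = a \<odot>\<^bsub>Y\<^esub> h y"
      unfolding h_def using hom_smult[OF g] pre ay by simp
  qed
  moreover have "g x = h (\<delta> x)" if x: "x \<in> carrier MQ" for x
    unfolding h_def using pre[OF hom_closed[OF \<delta> x]] r_id[OF x] x by (intro g_welldef) auto
  ultimately show ?thesis by blast
qed

section \<open>The quiver of the stratification and the representations \<open>I_S\<close>\<close>

lemma Rmod_simps:
  "carrier (Rmod R) = carrier R" "x \<oplus>\<^bsub>Rmod R\<^esub> y = x \<oplus>\<^bsub>R\<^esub> y" "\<zero>\<^bsub>Rmod R\<^esub> = \<zero>\<^bsub>R\<^esub>"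
  "a \<odot>\<^bsub>Rmod R\<^esub> x = a \<otimes>\<^bsub>R\<^esub> x"
  by (simp_all add: Rmod_def ring.defs module.defs)

lemma Zmod_simps:
  "carrier (Zmod R) = {\<zero>\<^bsub>R\<^esub>}" "x \<oplus>\<^bsub>Zmod R\<^esub> y = x \<oplus>\<^bsub>R\<^esub> y" "\<zero>\<^bsub>Zmod R\<^esub> = \<zero>\<^bsub>R\<^esub>"
  "a \<odot>\<^bsub>Zmod R\<^esub> x = a \<otimes>\<^bsub>R\<^esub> x"
  by (simp_all add: Zmod_def Rmod_def ring.defs module.defs)

lemma Rmod_module: assumes "cring R" shows "module R (Rmod R)"
proof -
  interpret cring R by fact
  show ?thesis
    by (intro moduleI[OF assms] abelian_groupI) (auto simp: Rmod_simps a_ac m_assoc l_distr r_distr)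
qed

lemma I_rep_simps:
  "fst (I_rep R S) V = (if sleq V S then Rmod R else Zmod R)"
  "snd (I_rep R S) V W = (if sleq V S \<and> sleq W S then (\<lambda>x. x) else (\<lambda>x. \<zero>\<^bsub>R\<^esub>))"
  by (simp_all add: I_rep_def)

lemma sleq_refl: "sleq T T"
  by (simp add: sleq_def)

lemma arrow_sleq_trans: "arrow V W \<Longrightarrow> sleq W T \<Longrightarrow> sleq V T"
  by (cases V; cases W; cases T) (auto simp: sleq_def arrow_def)

lemma arrow_not_sleq: "arrow V W \<Longrightarrow> \<not> sleq W V"
  by (cases V; cases W) (auto simp: sleq_def arrow_def)

lemma path_hom:
  assumes "is_rep R F" "sleq V T"
  shows "is_hom R (fst F V) (fst F T) (path_map F V T)"
proof (cases "V = T")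
  case True
  have "module R (fst F T)" using assms(1) unfolding is_rep_def by blast
  then show ?thesis using True hom_id unfolding path_map_def by simp
next
  case False
  then have "arrow V T" using assms(2) by (simp add: sleq_def)
  then show ?thesis using assms(1) False unfolding is_rep_def path_map_def by simp
qed

lemma path_map_arrow:
  assumes F: "is_rep R F" and VW: "arrow V W" and WT: "sleq W T" and x: "x \<in> carrier (fst F V)"
  shows "path_map F W T (snd F V W x) = path_map F V T x"
proof -
  have "V \<noteq> T" using arrow_not_sleq[OF VW] WT by blast
  show ?thesis
  proof (cases "W = T")
    case True
    then show ?thesis using \<open>V \<noteq> T\<close> by (simp add: path_map_def)
  next
    case False
    then have "arrow W T" using WT by (simp add: sleq_def)
    then show ?thesis using F VW x False \<open>V \<noteq> T\<close> unfolding is_rep_def path_map_def by auto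
  qed
qed

lemma morph_path_map:
  assumes "is_morph R G F \<phi>" "sleq V T" "x \<in> carrier (fst G V)"
  shows "\<phi> T (path_map G V T x) = path_map F V T (\<phi> V x)"
  using assms unfolding is_morph_def sleq_def path_map_def by auto

lemma free_basis:
  assumes "is_rep R F" "is_free_on R F B"
  shows "basis R (fst F T) {p\<in>B. sleq (fst p) T} (\<lambda>p. path_map F (fst p) T (snd p))"
proof -
  have support: "\<And>c. {p \<in> {p\<in>B. sleq (fst p) T}. c p \<noteq> \<zero>\<^bsub>R\<^esub>} = {p\<in>B. sleq (fst p) T \<and> c p \<noteq> \<zero>\<^bsub>R\<^esub>}"
    by auto
  have "path_map F (fst p) T (snd p) \<in> carrier (fst F T)" if "p \<in> B" "sleq (fst p) T" for p
    using hom_closed[OF path_hom[OF assms(1) that(2)]] assms(2) that(1)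
    unfolding is_free_on_def by blast
  then show ?thesis
    using assms(2) unfolding basis_def is_coordinates_def support is_free_on_def by blast
qed

lemma morph_into_I_rep:
  assumes g: "is_morph R G (I_rep R T) g" and x: "x \<in> carrier (fst G V)"
  shows "g V x = (if sleq V T then g T (path_map G V T x) else \<zero>\<^bsub>R\<^esub>)"
proof (cases "sleq V T")
  case True
  then show ?thesis
    using morph_path_map[OF g True x] by (simp add: path_map_def I_rep_simps sleq_refl)
next
  case False
  have "g V x \<in> carrier (fst (I_rep R T) V)"
    using g x unfolding is_morph_def is_hom_def by blast
  then show ?thesis using False by (simp add: I_rep_simps Zmod_simps)
qed

text \<open>Conversely every functional on \<open>F(T)\<close> extends to a morphism \<open>F \<rightarrow> I_T\<close>; thus
  \<open>Hom(F, I_T) = Hom(F(T), R)\<close>, which makes \<open>I_T\<close> behave like an injective object.\<close>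
lemma I_rep_morph_from_vertex:
  assumes F: "is_rep R F" and hT: "is_hom R (fst F T) (Rmod R) hT"
  shows "is_morph R F (I_rep R T) (\<lambda>V y. if sleq V T then hT (path_map F V T y) else \<zero>\<^bsub>R\<^esub>)"
  unfolding is_morph_def
proof (intro conjI allI impI ballI)
  interpret cring R using F module.axioms(1) unfolding is_rep_def by blast
  fix V
  show "is_hom R (fst F V) (fst (I_rep R T) V) (\<lambda>y. if sleq V T then hT (path_map F V T y) else \<zero>\<^bsub>R\<^esub>)"
  proof (cases "sleq V T")
    case True
    then show ?thesis using hom_comp[OF path_hom[OF F True] hT] by (simp add: I_rep_simps)
  next
    case False
    then show ?thesis by (simp add: I_rep_simps Zmod_simps is_hom_def)
  qed
next
  fix V W x assume VW: "arrow V W" and x: "x \<in> carrier (fst F V)"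
  show "(if sleq W T then hT (path_map F W T (snd F V W x)) else \<zero>\<^bsub>R\<^esub>)
      = snd (I_rep R T) V W (if sleq V T then hT (path_map F V T x) else \<zero>\<^bsub>R\<^esub>)"
    using path_map_arrow[OF F VW _ x] arrow_sleq_trans[OF VW] by (simp add: I_rep_simps)
qed

lemma morph_into_I_rep_factors:
  assumes G: "is_rep R G" and F: "is_rep R F" and d: "is_morph R G F d"
    and g: "is_morph R G (I_rep R T) g" and hT: "is_hom R (fst F T) (Rmod R) hT"
    and factors_at_T: "\<And>x. x \<in> carrier (fst G T) \<Longrightarrow> g T x = hT (d T x)"
  shows "\<exists>h. is_morph R F (I_rep R T) h \<and> (\<forall>V. \<forall>x\<in>carrier (fst G V). g V x = h V (d V x))"
proof (intro exI conjI allI ballI)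
  show "is_morph R F (I_rep R T) (\<lambda>V y. if sleq V T then hT (path_map F V T y) else \<zero>\<^bsub>R\<^esub>)"
    by (rule I_rep_morph_from_vertex[OF F hT])
  fix V x assume x: "x \<in> carrier (fst G V)"
  show "g V x = (if sleq V T then hT (path_map F V T (d V x)) else \<zero>\<^bsub>R\<^esub>)"
  proof (cases "sleq V T")
    case True
    have "g V x = g T (path_map G V T x)" using morph_into_I_rep[OF g x] True by simp
    also have "\<dots> = hT (d T (path_map G V T x))"
      by (rule factors_at_T[OF hom_closed[OF path_hom[OF G True] x]])
    also have "\<dots> = hT (path_map F V T (d V x))" using morph_path_map[OF d True x] by simp
    finally show ?thesis using True by simp
  next
    case False
    then show ?thesis using morph_into_I_rep[OF g x] by simp
  qed
qed

text \<open>A surjection onto \<open>R\<close> splits: if \<open>eps x0 = 1\<close>, then \<open>x \<mapsto> x - eps x \<cdot> x0\<close> retracts onto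
  the kernel.\<close>
lemma unit_kernel_retraction:
  assumes cR: "cring R" and M: "module R M" and eps: "is_hom R M (Rmod R) eps"
    and unit: "\<one>\<^bsub>R\<^esub> \<in> eps ` carrier M"
  shows "\<exists>r. is_retraction R M {x\<in>carrier M. eps x = \<zero>\<^bsub>R\<^esub>} r"
proof -
  interpret R: cring R by fact
  interpret M: module R M by fact
  interpret A: module R "Rmod R" by (rule Rmod_module[OF cR])
  obtain x0 where x0: "x0 \<in> carrier M" "eps x0 = \<one>\<^bsub>R\<^esub>" using unit by auto
  have eps_cl: "\<And>x. x \<in> carrier M \<Longrightarrow> eps x \<in> carrier R"
    using hom_closed[OF eps] by (simp add: Rmod_simps)
  have proj: "is_hom R M M (\<lambda>x. eps x \<odot>\<^bsub>M\<^esub> x0)"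
    unfolding is_hom_def
    using eps_cl x0 hom_add[OF eps] hom_smult[OF eps]
    by (auto simp: Rmod_simps M.smult_l_distr M.smult_assoc1)
  define r where "r x = x \<ominus>\<^bsub>M\<^esub> eps x \<odot>\<^bsub>M\<^esub> x0" for x
  have "is_hom R M M r"
    unfolding r_def by (rule hom_diff[OF M M hom_id[OF M] proj])
  moreover have "eps (r x) = \<zero>\<^bsub>R\<^esub>" if x: "x \<in> carrier M" for x
  proof -
    have "eps (eps x \<odot>\<^bsub>M\<^esub> x0) = eps x"
      using hom_smult[OF eps eps_cl[OF x] x0(1)] x0(2) eps_cl[OF x] by (simp add: Rmod_simps)
    then have "eps (r x) = eps x \<ominus>\<^bsub>Rmod R\<^esub> eps x"
      unfolding r_def using hom_minus[OF M A.module_axioms eps x] eps_cl x x0 by simp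
    also have "\<dots> = \<zero>\<^bsub>R\<^esub>"
      using A.r_neg[of "eps x"] eps_cl[OF x] by (simp add: A.minus_eq Rmod_simps)
    finally show ?thesis .
  qed
  moreover have "r x = x" if "x \<in> carrier M" "eps x = \<zero>\<^bsub>R\<^esub>" for x
    using that x0 unfolding r_def by (simp add: M.minus_eq)
  ultimately have "is_retraction R M {x\<in>carrier M. eps x = \<zero>\<^bsub>R\<^esub>} r"
    unfolding is_retraction_def by (auto intro: hom_closed)
  then show ?thesis by blast
qed

lemma augmentation_kernel_retraction:
  assumes cR: "cring R" and M: "module R M" and eps: "is_hom R M (fst (I_rep R S) T) eps"
    and surj: "eps ` carrier M = carrier (fst (I_rep R S) T)"
  shows "\<exists>r. is_retraction R M {x\<in>carrier M. eps x = \<zero>\<^bsub>fst (I_rep R S) T\<^esub>} r"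
proof (cases "sleq T S")
  case True
  interpret R: cring R by fact
  show ?thesis
    using unit_kernel_retraction[OF cR M] eps surj True by (simp add: I_rep_simps Rmod_simps)
next
  case False
  then have "{x\<in>carrier M. eps x = \<zero>\<^bsub>fst (I_rep R S) T\<^esub>} = carrier M"
    using hom_closed[OF eps] by (auto simp: I_rep_simps Zmod_simps)
  then show ?thesis using hom_id[OF M] unfolding is_retraction_def by auto
qed

section \<open>Vanishing of Ext\<close>

text \<open>Evaluating a free resolution of \<open>I_S\<close> at a vertex \<open>T\<close> gives an exact complex of free
  \<open>R\<close>-modules over \<open>I_S(T) \<in> {R, 0}\<close>; hence every module of boundaries is a retract.\<close>
lemma vertex_boundary_retraction:
  fixes F :: "nat \<Rightarrow> ('r, 'a) qrep"
  assumes cR: "cring R" and resolution: "free_resolution R (I_rep R S) F d eps"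
  shows "\<exists>r. is_retraction R (fst (F n) T) (d n T ` carrier (fst (F (Suc n)) T)) r"
proof -
  note resolution = resolution[unfolded free_resolution_def]
  have rep: "\<And>n. is_rep R (F n)" and free: "\<And>n. \<exists>B. is_free_on R (F n) B"
    and d: "\<And>n. is_morph R (F (Suc n)) (F n) (d n)" and eps: "is_morph R (F 0) (I_rep R S) eps"
    using resolution by simp_all
  have eps_surj: "eps T ` carrier (fst (F 0) T) = carrier (fst (I_rep R S) T)"
    using resolution by blast
  have exact0: "{x\<in>carrier (fst (F 0) T). eps T x = \<zero>\<^bsub>fst (I_rep R S) T\<^esub>}
      = d 0 T ` carrier (fst (F 1) T)"
    using resolution by blast
  have exact: "\<And>n. {x \<in> carrier (fst (F (Suc n)) T). d n T x = \<zero>\<^bsub>fst (F n) T\<^esub>}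
      = d (Suc n) T ` carrier (fst (F (Suc (Suc n))) T)"
    using resolution by blast
  define M where "M n = fst (F n) T" for n
  define \<delta> where "\<delta> n = d n T" for n
  have mods: "\<And>n. module R (M n)" using rep unfolding is_rep_def M_def by blast
  have homs: "\<And>n. is_hom R (M (Suc n)) (M n) (\<delta> n)"
    using d unfolding is_morph_def M_def \<delta>_def by blast
  have bases: "\<exists>(Xs::(stratum \<times> 'a) set) b. basis R (M n) Xs b" for n
    using free free_basis[OF rep] unfolding M_def by blast
  have exactM: "\<And>n. {x\<in>carrier (M (Suc n)). \<delta> n x = \<zero>\<^bsub>M n\<^esub>} = \<delta> (Suc n) ` carrier (M (Suc (Suc n)))"
    using exact unfolding M_def \<delta>_def .
  have eps_T: "is_hom R (M 0) (fst (I_rep R S) T) (eps T)"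
    using eps unfolding is_morph_def M_def by blast
  obtain r\<^sub>0 where "is_retraction R (M 0) {x\<in>carrier (M 0). eps T x = \<zero>\<^bsub>fst (I_rep R S) T\<^esub>} r\<^sub>0"
    using augmentation_kernel_retraction[OF cR mods eps_T] eps_surj unfolding M_def by blast
  then have "is_retraction R (M 0) (\<delta> 0 ` carrier (M 1)) r\<^sub>0"
    using exact0 unfolding M_def \<delta>_def by simp
  then obtain r where "is_retraction R (M n) (\<delta> n ` carrier (M (Suc n))) r"
    using boundary_retractions[where M = M and \<delta> = \<delta>, OF mods homs bases exactM] by blast
  then show ?thesis unfolding M_def \<delta>_def by blast
qed

text \<open>The heart of the argument: a cocycle \<open>g : F (m+1) \<rightarrow> I_T\<close> is a coboundary.  Its
  \<open>T\<close>-component factors through \<open>d m T\<close> (boundaries at \<open>T\<close> are a retract), and a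
  morphism into \<open>I_T\<close> is determined by its \<open>T\<close>-component.\<close>
lemma cocycle_is_coboundary:
  assumes cR: "cring R" and rep: "\<And>n. is_rep R (F n)"
    and d: "\<And>n. is_morph R (F (Suc n)) (F n) (d n)"
    and exact: "{x \<in> carrier (fst (F (Suc m)) T). d m T x = \<zero>\<^bsub>fst (F m) T\<^esub>}
      = d (Suc m) T ` carrier (fst (F (Suc (Suc m))) T)"
    and r: "is_retraction R (fst (F m) T) (d m T ` carrier (fst (F (Suc m)) T)) r"
    and g: "is_morph R (F (Suc m)) (I_rep R T) g"
    and cocycle: "\<forall>V. \<forall>x\<in>carrier (fst (F (Suc (Suc m))) V). g V (d (Suc m) V x) = \<zero>\<^bsub>fst (I_rep R T) V\<^esub>"
  shows "\<exists>h. is_morph R (F m) (I_rep R T) h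
      \<and> (\<forall>V. \<forall>x\<in>carrier (fst (F (Suc m)) V). g V x = h V (d m V x))"
proof -
  have mods: "\<And>n. module R (fst (F n) T)" using rep unfolding is_rep_def by blast
  have homs: "\<And>n. is_hom R (fst (F (Suc n)) T) (fst (F n) T) (d n T)"
    using d unfolding is_morph_def by blast
  have "is_hom R (fst (F (Suc m)) T) (fst (I_rep R T) T) (g T)"
    using g unfolding is_morph_def by blast
  then have gT: "is_hom R (fst (F (Suc m)) T) (Rmod R) (g T)"
    by (simp add: I_rep_simps sleq_refl)
  have gT_cocycle: "g T x = \<zero>\<^bsub>Rmod R\<^esub>"
    if "x \<in> carrier (fst (F (Suc m)) T)" "d m T x = \<zero>\<^bsub>fst (F m) T\<^esub>" for x
  proof -
    have "x \<in> {x \<in> carrier (fst (F (Suc m)) T). d m T x = \<zero>\<^bsub>fst (F m) T\<^esub>}"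
      using that by simp
    then obtain z where z: "z \<in> carrier (fst (F (Suc (Suc m))) T)" "x = d (Suc m) T z"
      unfolding exact ..
    have "g T (d (Suc m) T z) = \<zero>\<^bsub>fst (I_rep R T) T\<^esub>" using cocycle z(1) by blast
    then show ?thesis using z(2) by (simp add: I_rep_simps sleq_refl)
  qed
  obtain hT where hT: "is_hom R (fst (F m) T) (Rmod R) hT"
    and factors: "\<And>x. x \<in> carrier (fst (F (Suc m)) T) \<Longrightarrow> g T x = hT (d m T x)"
    using factor_through_retracted_image[OF mods mods Rmod_module[OF cR] homs r gT gT_cocycle]
    by blast
  show ?thesis by (rule morph_into_I_rep_factors[OF rep[of "Suc m"] rep[of m] d[of m] g hT factors])
qed

theorem lemma5p3:
  fixes R :: "'r ring"
    and S T :: stratum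
    and F :: "nat \<Rightarrow> ('r, 'a) qrep"
    and d :: "nat \<Rightarrow> stratum \<Rightarrow> 'a \<Rightarrow> 'a"
    and eps :: "stratum \<Rightarrow> 'a \<Rightarrow> 'r"
    and q :: nat
  assumes "principal_domain R"
    and "free_resolution R (I_rep R S) F d eps"
    and "q > 0"
  shows "Ext_vanishes R F d (I_rep R T) q"
proof -
  have cR: "cring R" using assms(1) principal_domain.axioms(1) domain.axioms(1) by blast
  obtain m where q: "q = Suc m" using assms(3) gr0_implies_Suc by blast
  have rep: "\<And>n. is_rep R (F n)" and d: "\<And>n. is_morph R (F (Suc n)) (F n) (d n)"
    using assms(2) unfolding free_resolution_def by simp_all
  have exact: "{x \<in> carrier (fst (F (Suc m)) T). d m T x = \<zero>\<^bsub>fst (F m) T\<^esub>}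
      = d (Suc m) T ` carrier (fst (F (Suc (Suc m))) T)"
    using assms(2) unfolding free_resolution_def by blast
  obtain r where r: "is_retraction R (fst (F m) T) (d m T ` carrier (fst (F (Suc m)) T)) r"
    using vertex_boundary_retraction[OF cR assms(2)] by blast
  show ?thesis
    unfolding Ext_vanishes_def q diff_Suc_1
    by (intro allI impI, elim conjE) (rule cocycle_is_coboundary[OF cR rep d exact r])
qed


end
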